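(* Let $v\in C(S^1,(0,\infty))$ be separable in $S^1$ and suppose $v((\cos\alpha,\sin\alpha))=v((\cos(\alpha+\pi),\sin(\alpha+\pi)))$ for every $\alpha\in[0,2\pi)$. Then $v$ is constant on $S^1$.
   Context: $S^1\subset\mathbb{R}^2$ is the unit circle. For $\alpha\in\mathbb{R}$, $S^1_\alpha=\{(\cos(\alpha+\theta),\sin(\alpha+\theta)):\theta\in(0,\pi)\}$, and for $x\in S^1$, $l_\alpha(x)$ denotes the reflection of $x$ across the line through the origin with direction $(\cos\alpha,\sin\alpha)$. A function $v\in C(S^1,\mathbb{R})$ is called separable in $S^1$ if for every $\alpha\in[0,2\pi)$, either $v(l_\alpha(x))\ge v(x)$ for all $x\in S^1_\alpha$, or $v(l_\alpha(x))\le v(x)$ for all $x\in S^1_\alpha$. *)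

theory Defs
  imports "HOL-Analysis.Analysis"
begin

definition S1 :: "(real \<times> real) set" where
  "S1 = {p. (fst p)\<^sup>2 + (snd p)\<^sup>2 = 1}"

definition S1_half :: "real \<Rightarrow> (real \<times> real) set" where
  "S1_half \<alpha> = {(cos (\<alpha> + \<theta>), sin (\<alpha> + \<theta>)) | \<theta>. \<theta> \<in> {0<..<pi}}"

text \<open>Reflection across the line through the origin with direction (cos a, sin a):
  l(x) = 2 (x . u) u - x.\<close>
definition refl_line :: "real \<Rightarrow> real \<times> real \<Rightarrow> real \<times> real" where
  "refl_line \<alpha> p =
     (let d = fst p * cos \<alpha> + snd p * sin \<alpha>
      in (2 * d * cos \<alpha> - fst p, 2 * d * sin \<alpha> - snd p))"

definition separable_S1 :: "(real \<times> real \<Rightarrow> real) \<Rightarrow> bool" where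
  "separable_S1 v \<longleftrightarrow>
     (\<forall>\<alpha>\<in>{0..<2*pi}.
        (\<forall>x\<in>S1_half \<alpha>. v (refl_line \<alpha> x) \<ge> v x) \<or>
        (\<forall>x\<in>S1_half \<alpha>. v (refl_line \<alpha> x) \<le> v x))"

end

theory Submission
  imports Defs
begin

text \<open>Compare the points at angles \<open>0\<close> and \<open>t\<close> with the reflection across the bisecting direction
  \<open>t/2\<close>: it swaps angle \<open>0\<close> with \<open>t\<close>, and also angle \<open>\<pi>\<close> with \<open>t - \<pi>\<close>. Separability makes the two
  resulting comparisons point the same way, while antipodal symmetry turns the second one into
  the reverse of the first; hence \<open>v\<close> takes the same value at angles \<open>0\<close> and \<open>t\<close>.\<close>

lemma cos_sin_in_S1: "(cos t, sin t) \<in> S1"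
  unfolding S1_def by simp

lemma S1_cos_sin_param:
  assumes "x \<in> S1"
  obtains t where "t \<in> {0..<2*pi}" "x = (cos t, sin t)"
proof -
  have "(fst x)\<^sup>2 + (snd x)\<^sup>2 = 1"
    using assms unfolding S1_def by simp
  then obtain t where "0 \<le> t" "t < 2*pi" "fst x = cos t" "snd x = sin t"
    by (rule sincos_total_2pi)
  then show thesis
    using that by (simp add: prod_eq_iff)
qed

lemma cos_sin_in_S1_half: "\<theta> \<in> {0<..<pi} \<Longrightarrow> (cos (\<alpha> + \<theta>), sin (\<alpha> + \<theta>)) \<in> S1_half \<alpha>"
  unfolding S1_half_def by blast

lemma refl_line_cos_sin:
  "refl_line \<alpha> (cos (\<alpha> + \<theta>), sin (\<alpha> + \<theta>)) = (cos (\<alpha> - \<theta>), sin (\<alpha> - \<theta>))"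
proof -
  have "cos (\<alpha> + \<theta>) * cos \<alpha> + sin (\<alpha> + \<theta>) * sin \<alpha> = cos \<theta>"
    using cos_diff[of "\<alpha> + \<theta>" \<alpha>] by simp
  moreover have "2 * cos \<theta> * cos \<alpha> - cos (\<alpha> + \<theta>) = cos (\<alpha> - \<theta>)"
    by (simp add: cos_add cos_diff algebra_simps)
  moreover have "2 * cos \<theta> * sin \<alpha> - sin (\<alpha> + \<theta>) = sin (\<alpha> - \<theta>)"
    by (simp add: sin_add sin_diff algebra_simps)
  ultimately show ?thesis
    unfolding refl_line_def Let_def by simp
qed

lemma separable_S1_angle_cases:
  assumes "separable_S1 v" and "\<alpha> \<in> {0..<2*pi}"
  shows "(\<forall>\<theta>\<in>{0<..<pi}. v (cos (\<alpha> + \<theta>), sin (\<alpha> + \<theta>)) \<le> v (cos (\<alpha> - \<theta>), sin (\<alpha> - \<theta>))) \<or>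
         (\<forall>\<theta>\<in>{0<..<pi}. v (cos (\<alpha> + \<theta>), sin (\<alpha> + \<theta>)) \<ge> v (cos (\<alpha> - \<theta>), sin (\<alpha> - \<theta>)))"
  using assms cos_sin_in_S1_half refl_line_cos_sin unfolding separable_S1_def by metis

lemma antipodal_invariant:
  assumes "\<forall>\<alpha>\<in>{0..<2*pi}. v (cos \<alpha>, sin \<alpha>) = v (cos (\<alpha> + pi), sin (\<alpha> + pi))"
    and "x \<in> S1"
  shows "v (- x) = v x"
proof -
  obtain t where "t \<in> {0..<2*pi}" "x = (cos t, sin t)"
    using assms(2) by (rule S1_cos_sin_param)
  then show ?thesis
    using assms(1) by auto
qed

lemma separable_antipodal_angle_eq:
  assumes sep: "separable_S1 v"
    and antipodal: "\<forall>x\<in>S1. v (- x) = v x"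
    and t: "t \<in> {0<..<2*pi}"
  shows "v (cos t, sin t) = v (1, 0)"
proof -
  define \<alpha> where "\<alpha> = t / 2"
  have \<alpha>: "\<alpha> \<in> {0..<2*pi}" "\<alpha> \<in> {0<..<pi}" "pi - \<alpha> \<in> {0<..<pi}"
    using t pi_gt_zero unfolding \<alpha>_def by auto
  have "\<alpha> + \<alpha> = t" "\<alpha> - \<alpha> = 0" "\<alpha> + (pi - \<alpha>) = pi" "\<alpha> - (pi - \<alpha>) = t - pi"
    unfolding \<alpha>_def by auto
  then have "(v (cos t, sin t) \<le> v (1, 0) \<and> v (-1, 0) \<le> v (cos (t - pi), sin (t - pi))) \<or>
             (v (cos t, sin t) \<ge> v (1, 0) \<and> v (-1, 0) \<ge> v (cos (t - pi), sin (t - pi)))"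
    using separable_S1_angle_cases[OF sep \<alpha>(1)] \<alpha>(2,3) by fastforce
  moreover have "v (cos (t - pi), sin (t - pi)) = v (cos t, sin t)"
    using antipodal[rule_format, OF cos_sin_in_S1[of t]] by simp
  moreover have "v (-1, 0) = v (1, 0)"
    using antipodal[rule_format, OF cos_sin_in_S1[of 0]] by simp
  ultimately show ?thesis
    by linarith
qed

theorem corollary2p2:
  fixes v :: "real \<times> real \<Rightarrow> real"
  assumes "continuous_on S1 v"
    and "\<forall>x\<in>S1. v x > 0"
    and "separable_S1 v"
    and "\<forall>\<alpha>\<in>{0..<2*pi}. v (cos \<alpha>, sin \<alpha>) = v (cos (\<alpha> + pi), sin (\<alpha> + pi))"
  shows "\<exists>c. \<forall>x\<in>S1. v x = c"
proof (intro exI ballI)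
  have antipodal: "\<forall>x\<in>S1. v (- x) = v x"
    using antipodal_invariant[OF assms(4)] by blast
  fix x
  assume "x \<in> S1"
  then obtain t where t: "t \<in> {0..<2*pi}" "x = (cos t, sin t)"
    by (rule S1_cos_sin_param)
  show "v x = v (1, 0)"
  proof (cases "t = 0")
    case False
    then show ?thesis
      using separable_antipodal_angle_eq[OF assms(3) antipodal] t by simp
  qed (use t in simp)
qed

end
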